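(* For all integers $n\ge 1$, $$s_3(n)=\tfrac{4}{3}n^3-3n^2+\tfrac{8}{3}n-1,\qquad d_3(n)=\tfrac{2}{3}n^4-\tfrac{4}{3}n^3+\tfrac{11}{6}n^2-\tfrac{13}{6}n+1.$$
   Context: For $n\ge 1$, the $2\times n$ board consists of $2n$ unit squares arranged in 2 rows and $n$ columns; two squares are adjacent iff they share an edge. A piece is a nonempty set of squares that is connected under adjacency. A division of the board into $k$ pieces is a partition of the set of all $2n$ squares into exactly $k$ pieces. $d_k(n)$ denotes the number of divisions of the $2\times n$ board into $k$ pieces. $s_k(n)$ denotes the number of such divisions in which the two squares of the rightmost column lie in different pieces. *)

theory Defs
  imports Complex_Main
begin

definition board :: "nat \<Rightarrow> (nat \<times> nat) set" where
  "board n = {(r, c). r < 2 \<and> c < n}"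

definition adjacent :: "nat \<times> nat \<Rightarrow> nat \<times> nat \<Rightarrow> bool" where
  "adjacent p q \<longleftrightarrow>
     (fst p = fst q \<and> (snd p = Suc (snd q) \<or> snd q = Suc (snd p))) \<or>
     (snd p = snd q \<and> (fst p = Suc (fst q) \<or> fst q = Suc (fst p)))"

definition is_piece :: "(nat \<times> nat) set \<Rightarrow> bool" where
  "is_piece S \<longleftrightarrow> S \<noteq> {} \<and>
     (\<forall>p\<in>S. \<forall>q\<in>S. (\<lambda>x y. x \<in> S \<and> y \<in> S \<and> adjacent x y)\<^sup>*\<^sup>* p q)"

definition is_division :: "nat \<Rightarrow> nat \<Rightarrow> (nat \<times> nat) set set \<Rightarrow> bool" where
  "is_division n k P \<longleftrightarrow>
     (\<forall>A\<in>P. is_piece A) \<and> \<Union>P = board n \<and>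
     (\<forall>A\<in>P. \<forall>B\<in>P. A \<noteq> B \<longrightarrow> A \<inter> B = {}) \<and> card P = k"

definition d :: "nat \<Rightarrow> nat \<Rightarrow> nat" where
  "d k n = card {P. is_division n k P}"

definition s :: "nat \<Rightarrow> nat \<Rightarrow> nat" where
  "s k n = card {P. is_division n k P \<and>
     (\<forall>A\<in>P. \<not> ((0, n - 1) \<in> A \<and> (1, n - 1) \<in> A))}"

end

theory Submission
  imports Defs
begin

text \<open>Deleting the last column of a division of the \<open>2 \<times> (n + 1)\<close> board leaves a division of
  the \<open>2 \<times> n\<close> board: a path that detours through column \<open>n\<close> can be shortcut inside
  column \<open>n - 1\<close>. Conversely, a division is determined by this restriction together with
  the fate of the two new squares: each joins the piece through one of the two squares of
  column \<open>n - 1\<close>, or lies in a piece inside the new column. Writing \<open>D\<close>, \<open>S\<close>, \<open>T\<close> for the numbers of all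
  divisions, of those whose last column is split, and of those whose last column lies in one piece,
  this gives
  \<open>T (n+1) (j+1) = D n j + D n (j+1) + S n (j+1)\<close>,
  \<open>S (n+1) (j+2) = D n j + 2 D n (j+1) + S n (j+2)\<close> and \<open>D = T + S\<close>.
  With \<open>D n 0 = 0\<close>, \<open>D n 1 = 1\<close>, \<open>S n 1 = 0\<close> and the values for \<open>n = 1\<close>,
  induction on \<open>n\<close> yields the closed forms for two and then three pieces.\<close>

section \<open>Pieces\<close>

definition adjacent_in :: "(nat \<times> nat) set \<Rightarrow> nat \<times> nat \<Rightarrow> nat \<times> nat \<Rightarrow> bool" where
  "adjacent_in S x y \<longleftrightarrow> x \<in> S \<and> y \<in> S \<and> adjacent x y"

lemma is_piece_iff: "is_piece S \<longleftrightarrow> S \<noteq> {} \<and> (\<forall>p\<in>S. \<forall>q\<in>S. (adjacent_in S)\<^sup>*\<^sup>* p q)"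
  unfolding is_piece_def adjacent_in_def[abs_def] by simp

lemma adjacent_sym: "adjacent x y \<longleftrightarrow> adjacent y x"
  unfolding adjacent_def by auto

lemma adjacent_in_rtranclp_sym: "(adjacent_in S)\<^sup>*\<^sup>* p q \<Longrightarrow> (adjacent_in S)\<^sup>*\<^sup>* q p"
  by (rule symp_rtranclp[THEN sympD]) (auto simp: symp_def adjacent_in_def adjacent_sym)

lemma adjacent_in_rtranclp_mono:
  "S \<subseteq> T \<Longrightarrow> (adjacent_in S)\<^sup>*\<^sup>* p q \<Longrightarrow> (adjacent_in T)\<^sup>*\<^sup>* p q"
  by (rule mono_rtranclp[rule_format]) (auto simp: adjacent_in_def)

lemma is_piece_from_root:
  assumes "r \<in> S" "\<forall>p\<in>S. (adjacent_in S)\<^sup>*\<^sup>* r p"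
  shows "is_piece S"
  unfolding is_piece_iff using assms
  by (metis empty_iff adjacent_in_rtranclp_sym rtranclp_trans)

lemma is_piece_connected: "is_piece S \<Longrightarrow> p \<in> S \<Longrightarrow> q \<in> S \<Longrightarrow> (adjacent_in S)\<^sup>*\<^sup>* p q"
  unfolding is_piece_iff by blast

lemma is_piece_singleton: "is_piece {x}"
  by (rule is_piece_from_root[of x]) auto

lemma is_piece_insert:
  assumes "is_piece A" "y \<in> A" "adjacent y x"
  shows "is_piece (insert x A)"
proof (rule is_piece_from_root[of y])
  show "y \<in> insert x A" using assms by auto
  have "adjacent_in (insert x A) y x" using assms by (auto simp: adjacent_in_def)
  then show "\<forall>p\<in>insert x A. (adjacent_in (insert x A))\<^sup>*\<^sup>* y p"
    using is_piece_connected[OF assms(1,2)] adjacent_in_rtranclp_mono[of A "insert x A"] by blast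
qed

lemma is_piece_pair: "adjacent x y \<Longrightarrow> is_piece {x, y}"
  using is_piece_insert[OF is_piece_singleton, of x x y] by (simp add: insert_commute)

lemma adjacent_in_path_crosses:
  assumes "(adjacent_in S)\<^sup>*\<^sup>* p q" "p \<in> A" "q \<notin> A"
  shows "\<exists>x y. x \<in> S \<inter> A \<and> y \<in> S - A \<and> adjacent x y"
  using assms
proof (induction rule: rtranclp_induct)
  case (step y z)
  then show ?case unfolding adjacent_in_def by (cases "y \<in> A") blast+
qed simp

lemma is_piece_crossing_edge:
  assumes "is_piece S" "a \<in> S \<inter> A" "b \<in> S - A"
  shows "\<exists>x y. x \<in> S \<inter> A \<and> y \<in> S - A \<and> adjacent x y"
  using adjacent_in_path_crosses[OF is_piece_connected[OF assms(1)]] assms(2,3) by blast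

lemma board_iff [simp]: "(a, b) \<in> board n \<longleftrightarrow> a < 2 \<and> b < n"
  unfolding board_def by auto

lemma finite_board: "finite (board n)"
  by (rule finite_subset[of _ "{..<2} \<times> {..<n}"]) auto

definition column :: "nat \<Rightarrow> (nat \<times> nat) set" where
  "column n = {(0, n), (1, n)}"

lemma board_Suc: "board (Suc n) = board n \<union> column n"
  unfolding column_def board_def by auto

lemma column_board_disjoint: "column n \<inter> board n = {}"
  unfolding column_def by auto

lemma is_piece_column: "is_piece (column n)"
  unfolding column_def by (rule is_piece_pair) (simp add: adjacent_def)

lemma piece_column_exit:
  assumes "is_piece X" "X \<subseteq> board (Suc n)" "(i, n) \<in> X" "y \<in> X \<inter> board n"
  shows "(1 - i, n) \<in> X \<or> (i, n - 1) \<in> X"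
proof -
  have "i < 2" using assms(2,3) by auto
  have "y \<in> X - {(i, n)}" using assms(4) by auto
  then obtain x z where "x \<in> X \<inter> {(i, n)}" "z \<in> X - {(i, n)}" "adjacent x z"
    using is_piece_crossing_edge[OF assms(1), of "(i, n)" "{(i, n)}" y] assms(3) by blast
  moreover have "z \<in> board (Suc n)" using \<open>z \<in> X - {(i, n)}\<close> assms(2) by blast
  ultimately show ?thesis using \<open>i < 2\<close> by (cases z) (auto simp: adjacent_def)
qed

lemma piece_column_entry:
  assumes "is_piece X" "X \<subseteq> board (Suc n)" "c \<in> X \<inter> column n" "y \<in> X \<inter> board n"
  shows "(0, n - 1) \<in> X \<or> (1, n - 1) \<in> X"
proof -
  obtain x z where "x \<in> X \<inter> column n" "z \<in> X - column n" "adjacent x z"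
    using is_piece_crossing_edge[OF assms(1) assms(3)] assms(4) column_board_disjoint by blast
  moreover have "z \<in> board (Suc n)" using \<open>z \<in> X - column n\<close> assms(2) by blast
  ultimately show ?thesis
    by (cases z) (auto simp: column_def adjacent_def board_Suc)
qed

text \<open>A path inside \<open>X\<close> that makes an excursion into column \<open>n\<close> leaves and re-enters
  \<open>board n\<close> at the squares \<open>(j, n - 1)\<close>, which are equal or adjacent; so it can be
  shortcut inside \<open>X \<inter> board n\<close>.\<close>

lemma restrict_board_path:
  assumes X: "X \<subseteq> board (Suc n)" and p: "p \<in> X \<inter> board n"
    and path: "(adjacent_in X)\<^sup>*\<^sup>* p y"
  shows "(y \<in> board n \<longrightarrow> (adjacent_in (X \<inter> board n))\<^sup>*\<^sup>* p y) \<and>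
    (y \<notin> board n \<longrightarrow>
      (\<exists>j<2. (j, n - 1) \<in> X \<inter> board n \<and> (adjacent_in (X \<inter> board n))\<^sup>*\<^sup>* p (j, n - 1)))"
  using path
proof (induction rule: rtranclp_induct)
  case base
  then show ?case using p by auto
next
  case (step y z)
  let ?R = "(adjacent_in (X \<inter> board n))\<^sup>*\<^sup>*"
  obtain a b c e where yz: "y = (a, b)" "z = (c, e)" by fastforce
  have in_X: "y \<in> X" "z \<in> X" and adj: "adjacent (a, b) (c, e)"
    using step(2) yz by (auto simp: adjacent_in_def)
  have bounds: "a < 2" "b \<le> n" "c < 2" "e \<le> n" using in_X X yz by auto
  show ?case
  proof (cases "b < n")
    case True
    then have "?R p y" using step.IH yz bounds by auto
    show ?thesis
    proof (cases "e < n")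
      case True
      then have "adjacent_in (X \<inter> board n) y z"
        using in_X yz adj bounds \<open>b < n\<close> by (auto simp: adjacent_in_def)
      then show ?thesis using \<open>?R p y\<close> yz True bounds by (auto intro: rtranclp.rtrancl_into_rtrancl)
    next
      case False
      then have "b = n - 1" "a = c" using adj \<open>b < n\<close> bounds by (auto simp: adjacent_def)
      then show ?thesis using \<open>?R p y\<close> in_X yz bounds \<open>b < n\<close> False by auto
    qed
  next
    case False
    then obtain j where j: "j < 2" "(j, n - 1) \<in> X \<inter> board n" "?R p (j, n - 1)"
      using step.IH yz by auto
    show ?thesis
    proof (cases "e < n")
      case True
      then have "e = n - 1" "c = a" using adj False bounds by (auto simp: adjacent_def)
      show ?thesis
      proof (cases "j = a")
        case True
        then show ?thesis using j yz \<open>e = n - 1\<close> \<open>c = a\<close> by auto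
      next
        case False
        then have "adjacent_in (X \<inter> board n) (j, n - 1) z"
          using j in_X yz bounds \<open>e = n - 1\<close> \<open>c = a\<close> \<open>e < n\<close> by (auto simp: adjacent_in_def adjacent_def)
        then show ?thesis using j yz \<open>e < n\<close> by (auto intro: rtranclp.rtrancl_into_rtrancl)
      qed
    next
      case False
      then show ?thesis using j yz by auto
    qed
  qed
qed

lemma is_piece_restrict_board:
  assumes "is_piece X" "X \<subseteq> board (Suc n)" "X \<inter> board n \<noteq> {}"
  shows "is_piece (X \<inter> board n)"
proof -
  obtain p where p: "p \<in> X \<inter> board n" using assms(3) by blast
  show ?thesis
  proof (rule is_piece_from_root[OF p], intro ballI)
    fix q assume "q \<in> X \<inter> board n"
    then show "(adjacent_in (X \<inter> board n))\<^sup>*\<^sup>* p q"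
      using restrict_board_path[OF assms(2) p is_piece_connected[OF assms(1)]] p by blast
  qed
qed

section \<open>Restricting and extending divisions\<close>

lemma division_finite: "is_division n k P \<Longrightarrow> finite P"
  unfolding is_division_def
  by (rule finite_subset[of _ "Pow (board n)"]) (auto simp: finite_board)

lemma division_subset_board: "is_division n k P \<Longrightarrow> A \<in> P \<Longrightarrow> A \<subseteq> board n"
  unfolding is_division_def by auto

lemma division_nonempty: "is_division n k P \<Longrightarrow> A \<in> P \<Longrightarrow> A \<noteq> {}"
  unfolding is_division_def is_piece_def by auto

lemma division_piece: "is_division n k P \<Longrightarrow> A \<in> P \<Longrightarrow> is_piece A"
  unfolding is_division_def by auto

lemma division_card: "is_division n k P \<Longrightarrow> card P = k"
  unfolding is_division_def by auto

lemma division_unique_piece: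
  "is_division n k P \<Longrightarrow> A \<in> P \<Longrightarrow> B \<in> P \<Longrightarrow> x \<in> A \<Longrightarrow> x \<in> B \<Longrightarrow> A = B"
  unfolding is_division_def by blast

lemma division_disjoint: "is_division n k P \<Longrightarrow> A \<in> P \<Longrightarrow> B \<in> P \<Longrightarrow> A \<noteq> B \<Longrightarrow> A \<inter> B = {}"
  unfolding is_division_def by blast

lemma division_covers: "is_division n k P \<Longrightarrow> x \<in> board n \<Longrightarrow> \<exists>A\<in>P. x \<in> A"
  unfolding is_division_def by auto

definition last_column_split :: "nat \<Rightarrow> (nat \<times> nat) set set \<Rightarrow> bool" where
  "last_column_split n P \<longleftrightarrow> (\<forall>A\<in>P. \<not> ((0, n - 1) \<in> A \<and> (1, n - 1) \<in> A))"

text \<open>A division of \<open>board (Suc n)\<close> is described by its restriction \<open>Q\<close> to \<open>board n\<close>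
  together with the squares \<open>e0\<close> (\<open>e1\<close>) of column \<open>n\<close> that join the piece of \<open>Q\<close>
  containing \<open>(0, n - 1)\<close> (\<open>(1, n - 1)\<close>) and the set \<open>N\<close> of pieces lying inside
  column \<open>n\<close>.\<close>

definition attached_part ::
    "nat \<Rightarrow> (nat \<times> nat) set \<Rightarrow> (nat \<times> nat) set \<Rightarrow> (nat \<times> nat) set \<Rightarrow> (nat \<times> nat) set" where
  "attached_part n e0 e1 A =
     (if (0, n - 1) \<in> A then e0 else {}) \<union> (if (1, n - 1) \<in> A then e1 else {})"

definition extend_division :: "nat \<Rightarrow> (nat \<times> nat) set \<Rightarrow> (nat \<times> nat) set \<Rightarrow>
    (nat \<times> nat) set set \<Rightarrow> (nat \<times> nat) set set \<Rightarrow> (nat \<times> nat) set set" where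
  "extend_division n e0 e1 N Q = (\<lambda>A. A \<union> attached_part n e0 e1 A) ` Q \<union> N"

definition restrict_division :: "nat \<Rightarrow> (nat \<times> nat) set set \<Rightarrow> (nat \<times> nat) set set" where
  "restrict_division n P = (\<lambda>X. X \<inter> board n) ` P - {{}}"

lemma attached_part_subset: "attached_part n e0 e1 A \<subseteq> e0 \<union> e1"
  unfolding attached_part_def by auto

lemma extend_division_cases:
  assumes "X \<in> extend_division n e0 e1 N Q"
  obtains "X \<in> N" | A where "A \<in> Q" "X = A \<union> attached_part n e0 e1 A"
  using assms unfolding extend_division_def by blast

context
  fixes n :: nat and e0 e1 :: "(nat \<times> nat) set" and Q N :: "(nat \<times> nat) set set"
  assumes old: "\<And>A. A \<in> Q \<Longrightarrow> A \<subseteq> board n \<and> A \<noteq> {}"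
    and new: "\<And>X. X \<in> N \<Longrightarrow> X \<subseteq> column n"
    and attached: "e0 \<union> e1 \<subseteq> column n"
begin

lemma extended_piece_inter_board:
  "A \<in> Q \<Longrightarrow> (A \<union> attached_part n e0 e1 A) \<inter> board n = A"
  using old attached attached_part_subset[of n e0 e1 A] column_board_disjoint[of n] by blast

lemma extended_piece_inter_column:
  "A \<in> Q \<Longrightarrow> (A \<union> attached_part n e0 e1 A) \<inter> column n = attached_part n e0 e1 A"
  using old attached attached_part_subset[of n e0 e1 A] column_board_disjoint[of n] by blast

lemma extended_piece_not_in_column:
  "A \<in> Q \<Longrightarrow> \<not> A \<union> attached_part n e0 e1 A \<subseteq> column n"
  using old column_board_disjoint[of n] by blast

lemma restrict_extend_division: "restrict_division n (extend_division n e0 e1 N Q) = Q"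
proof -
  have "(\<lambda>X. X \<inter> board n) ` N \<subseteq> {{}}" using new column_board_disjoint by blast
  moreover have "{} \<notin> Q" using old by blast
  ultimately show ?thesis
    unfolding restrict_division_def extend_division_def image_Un image_image
    using extended_piece_inter_board by (auto simp: image_iff)
qed

lemma extend_division_column_pieces:
  "{X \<in> extend_division n e0 e1 N Q. X \<subseteq> column n} = N"
  using new extended_piece_not_in_column unfolding extend_division_def by blast

lemma card_extend_division:
  assumes "finite Q" "finite N"
  shows "card (extend_division n e0 e1 N Q) = card Q + card N"
proof -
  have "inj_on (\<lambda>A. A \<union> attached_part n e0 e1 A) Q"
    by (rule inj_on_inverseI[where g = "\<lambda>X. X \<inter> board n"]) (rule extended_piece_inter_board)
  moreover have "(\<lambda>A. A \<union> attached_part n e0 e1 A) ` Q \<inter> N = {}"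
    using new extended_piece_not_in_column by blast
  ultimately show ?thesis
    unfolding extend_division_def using assms by (simp add: card_Un_disjoint card_image)
qed

end

lemma extend_division_eqD:
  assumes old: "\<And>A. A \<in> Q \<Longrightarrow> A \<subseteq> board n \<and> A \<noteq> {}" "\<And>A. A \<in> Q' \<Longrightarrow> A \<subseteq> board n \<and> A \<noteq> {}"
    and new: "\<And>X. X \<in> N \<Longrightarrow> X \<subseteq> column n" "\<And>X. X \<in> N' \<Longrightarrow> X \<subseteq> column n"
    and attached: "e0 \<union> e1 \<subseteq> column n" "e0' \<union> e1' \<subseteq> column n"
    and eq: "extend_division n e0 e1 N Q = extend_division n e0' e1' N' Q'"
  shows "Q = Q'" "N = N'" "\<And>A. A \<in> Q \<Longrightarrow> attached_part n e0 e1 A = attached_part n e0' e1' A"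
proof -
  note facts = old new attached
  have "Q = restrict_division n (extend_division n e0 e1 N Q)"
    by (rule restrict_extend_division[symmetric]) (use facts in auto)
  also have "\<dots> = Q'" unfolding eq by (rule restrict_extend_division) (use facts in auto)
  finally show "Q = Q'" .
  have "N = {X \<in> extend_division n e0 e1 N Q. X \<subseteq> column n}"
    by (rule extend_division_column_pieces[symmetric]) (use facts in auto)
  also have "\<dots> = N'" unfolding eq by (rule extend_division_column_pieces) (use facts in auto)
  finally show "N = N'" .
  fix A assume A: "A \<in> Q"
  then have "A \<union> attached_part n e0 e1 A \<in> extend_division n e0' e1' N' Q'"
    using eq unfolding extend_division_def by blast
  then show "attached_part n e0 e1 A = attached_part n e0' e1' A"
  proof (cases rule: extend_division_cases)
    case 1
    have "\<not> A \<union> attached_part n e0 e1 A \<subseteq> column n"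
      by (rule extended_piece_not_in_column) (use facts A in auto)
    then show ?thesis using 1 new(2) by blast
  next
    case (2 B)
    have "A = (A \<union> attached_part n e0 e1 A) \<inter> board n"
      by (rule extended_piece_inter_board[symmetric]) (use facts A in auto)
    also have "\<dots> = B" unfolding 2(2)
      by (rule extended_piece_inter_board) (use facts 2(1) in auto)
    finally have "A = B" .
    have "attached_part n e0 e1 A = (A \<union> attached_part n e0 e1 A) \<inter> column n"
      by (rule extended_piece_inter_column[symmetric]) (use facts A in auto)
    also have "\<dots> = attached_part n e0' e1' B" unfolding 2(2)
      by (rule extended_piece_inter_column) (use facts 2(1) in auto)
    finally show ?thesis using \<open>A = B\<close> by simp
  qed
qed

lemma is_piece_union_column:
  assumes A: "is_piece A" and n: "n \<ge> 1" and E: "E \<subseteq> column n"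
    and top: "(0, n) \<in> E \<Longrightarrow> (0, n - 1) \<in> A \<or> ((1, n) \<in> E \<and> (1, n - 1) \<in> A)"
    and bottom: "(1, n) \<in> E \<Longrightarrow> (1, n - 1) \<in> A \<or> ((0, n) \<in> E \<and> (0, n - 1) \<in> A)"
  shows "is_piece (A \<union> E)"
proof -
  have adj: "adjacent (0, n - 1) (0, n)" "adjacent (1, n - 1) (1, n)"
    "adjacent (0, n) (1, n)" "adjacent (1, n) (0, n)"
    using n by (auto simp: adjacent_def)
  consider "E = {}" | "E = {(0, n)}" | "E = {(1, n)}" | "E = {(0, n), (1, n)}"
    using E unfolding column_def by blast
  then show ?thesis
  proof cases
    case 1
    then show ?thesis using A by simp
  next
    case 2
    then show ?thesis using top is_piece_insert[OF A _ adj(1)] by auto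
  next
    case 3
    then show ?thesis using bottom is_piece_insert[OF A _ adj(2)] by auto
  next
    case 4
    then show ?thesis
    proof (cases "(0, n - 1) \<in> A")
      case True
      have "is_piece (insert (1, n) (insert (0, n) A))"
        by (rule is_piece_insert[OF is_piece_insert[OF A True adj(1)] _ adj(3)]) simp
      then show ?thesis using 4 by (simp add: insert_commute)
    next
      case False
      then have "(1, n - 1) \<in> A" using top 4 by auto
      have "is_piece (insert (0, n) (insert (1, n) A))"
        by (rule is_piece_insert[OF is_piece_insert[OF A \<open>(1, n - 1) \<in> A\<close> adj(2)] _ adj(4)]) simp
      then show ?thesis using 4 by auto
    qed
  qed
qed

lemma attached_parts_disjoint:
  assumes Q: "is_division n k Q" and AB: "A \<in> Q" "B \<in> Q" "A \<noteq> B"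
    and split: "last_column_split n Q \<Longrightarrow> e0 \<inter> e1 = {}"
  shows "attached_part n e0 e1 A \<inter> attached_part n e0 e1 B = {}"
proof -
  have unique: "\<not> (u \<in> A \<and> u \<in> B)" for u
    using division_unique_piece[OF Q AB(1,2)] AB(3) by blast
  have split_if: "e0 \<inter> e1 = {}" if "C \<in> Q" "D \<in> Q" "C \<noteq> D" "(0, n - 1) \<in> C" "(1, n - 1) \<in> D" for C D
  proof (rule split)
    show "last_column_split n Q"
      unfolding last_column_split_def using that division_unique_piece[OF Q] by metis
  qed
  show ?thesis
  proof (cases "(0, n - 1) \<in> A")
    case True
    then show ?thesis
      using unique[of "(0, n - 1)"] unique[of "(1, n - 1)"] split_if[OF AB] unfolding attached_part_def by auto
  next
    case False
    then show ?thesis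
      using unique[of "(1, n - 1)"] split_if[OF AB(2,1) AB(3)[symmetric]] unfolding attached_part_def by auto
  qed
qed

lemma Union_extend_division:
  assumes n: "n \<ge> 1" and Q: "is_division n k Q" and cover: "e0 \<union> e1 \<union> \<Union>N = column n"
  shows "\<Union>(extend_division n e0 e1 N Q) = board (Suc n)" (is "\<Union>?P = _")
proof
  let ?ext = "\<lambda>A. A \<union> attached_part n e0 e1 A"
  show "\<Union>?P \<subseteq> board (Suc n)"
  proof
    fix x assume "x \<in> \<Union>?P"
    then obtain X where "X \<in> ?P" "x \<in> X" by blast
    then show "x \<in> board (Suc n)"
      unfolding board_Suc
      by (cases rule: extend_division_cases)
        (use division_subset_board[OF Q] attached_part_subset cover in blast)+
  qed
  have ext_mem: "?ext A \<in> ?P" if "A \<in> Q" for A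
    using that unfolding extend_division_def by blast
  obtain A0 A1 where A0: "A0 \<in> Q" "(0, n - 1) \<in> A0" and A1: "A1 \<in> Q" "(1, n - 1) \<in> A1"
    using division_covers[OF Q, of "(0, n - 1)"] division_covers[OF Q, of "(1, n - 1)"] n by auto
  have "e0 \<subseteq> ?ext A0" "e1 \<subseteq> ?ext A1"
    using A0(2) A1(2) unfolding attached_part_def by auto
  then have "e0 \<union> e1 \<subseteq> \<Union>?P" using ext_mem[OF A0(1)] ext_mem[OF A1(1)] by blast
  moreover have "board n \<subseteq> \<Union>?P"
  proof
    fix x assume "x \<in> board n"
    then obtain A where "A \<in> Q" "x \<in> A" using division_covers[OF Q] by blast
    then show "x \<in> \<Union>?P" using ext_mem[of A] by blast
  qed
  moreover have "\<Union>N \<subseteq> \<Union>?P" unfolding extend_division_def by blast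
  ultimately show "board (Suc n) \<subseteq> \<Union>?P" unfolding board_Suc cover[symmetric] by blast
qed

lemma extend_division_disjoint:
  assumes Q: "is_division n k Q"
    and N: "\<And>X Y. X \<in> N \<Longrightarrow> Y \<in> N \<Longrightarrow> X \<noteq> Y \<Longrightarrow> X \<inter> Y = {}"
    and cover: "e0 \<union> e1 \<union> \<Union>N = column n" and new_disjoint: "\<Union>N \<inter> (e0 \<union> e1) = {}"
    and split: "last_column_split n Q \<Longrightarrow> e0 \<inter> e1 = {}"
    and XY: "X \<in> extend_division n e0 e1 N Q" "Y \<in> extend_division n e0 e1 N Q" "X \<noteq> Y"
  shows "X \<inter> Y = {}"
proof -
  let ?ext = "\<lambda>A. A \<union> attached_part n e0 e1 A"
  have attached: "attached_part n e0 e1 A \<subseteq> column n" for A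
    using cover attached_part_subset[of n e0 e1 A] by blast
  have old_new: "?ext A \<inter> Z = {}" if "A \<in> Q" "Z \<in> N" for A Z
  proof -
    have "A \<inter> Z = {}"
      using division_subset_board[OF Q that(1)] cover that(2) column_board_disjoint[of n] by blast
    moreover have "attached_part n e0 e1 A \<inter> Z = {}"
      using attached_part_subset[of n e0 e1 A] new_disjoint that(2) by blast
    ultimately show ?thesis by blast
  qed
  have old_old: "?ext A \<inter> ?ext B = {}" if "A \<in> Q" "B \<in> Q" "A \<noteq> B" for A B
  proof -
    have "A \<inter> B = {}" using division_unique_piece[OF Q that(1,2)] that(3) by blast
    moreover have "A \<inter> attached_part n e0 e1 B = {}" "attached_part n e0 e1 A \<inter> B = {}"
      using division_subset_board[OF Q that(1)] division_subset_board[OF Q that(2)]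
        attached[of A] attached[of B] column_board_disjoint[of n] by blast+
    ultimately show ?thesis using attached_parts_disjoint[OF Q that split] by blast
  qed
  from XY(1) show ?thesis
  proof (cases rule: extend_division_cases)
    case 1
    from XY(2) show ?thesis
      by (cases rule: extend_division_cases) (use 1 N XY(3) old_new in \<open>auto simp: Int_commute\<close>)
  next
    case (2 A)
    from XY(2) show ?thesis
    proof (cases rule: extend_division_cases)
      case (2 B)
      then show ?thesis using \<open>A \<in> Q\<close> \<open>X = ?ext A\<close> XY(3) old_old by blast
    qed (use 2 old_new in blast)
  qed
qed

lemma is_division_extend:
  assumes n: "n \<ge> 1" and Q: "is_division n k Q"
    and N: "finite N" "\<And>X. X \<in> N \<Longrightarrow> is_piece X"
      "\<And>X Y. X \<in> N \<Longrightarrow> Y \<in> N \<Longrightarrow> X \<noteq> Y \<Longrightarrow> X \<inter> Y = {}"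
    and cover: "e0 \<union> e1 \<union> \<Union>N = column n" and new_disjoint: "\<Union>N \<inter> (e0 \<union> e1) = {}"
    and split: "last_column_split n Q \<Longrightarrow> e0 \<inter> e1 = {}"
    and top: "(1, n) \<in> e0 \<Longrightarrow> (0, n) \<in> e0" and bottom: "(0, n) \<in> e1 \<Longrightarrow> (1, n) \<in> e1"
  shows "is_division (Suc n) (k + card N) (extend_division n e0 e1 N Q)"
    (is "is_division _ _ ?P")
proof -
  have attached: "attached_part n e0 e1 A \<subseteq> column n" for A
    using cover attached_part_subset[of n e0 e1 A] by blast
  have pieces: "is_piece X" if "X \<in> ?P" for X
    using that
  proof (cases rule: extend_division_cases)
    case (2 A)
    show ?thesis unfolding 2(2)
      using is_piece_union_column[OF division_piece[OF Q 2(1)] n attached[of A]] top bottom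
      by (cases "(0, n - 1) \<in> A"; cases "(1, n - 1) \<in> A") (auto simp: attached_part_def)
  qed (use N in blast)
  have "card ?P = card Q + card N"
    by (rule card_extend_division)
      (use division_subset_board[OF Q] division_nonempty[OF Q] attached cover N(1)
        division_finite[OF Q] in auto)
  then have "card ?P = k + card N" using division_card[OF Q] by simp
  then show ?thesis
    unfolding is_division_def
    using pieces Union_extend_division[OF n Q cover] extend_division_disjoint[OF Q N(3) cover new_disjoint split]
    by blast
qed

lemma division_attached_part:
  assumes n: "n \<ge> 1" and P: "is_division (Suc n) k P"
    and X0: "X0 \<in> P" "(0, n - 1) \<in> X0" and X1: "X1 \<in> P" "(1, n - 1) \<in> X1"
    and X: "X \<in> P" "\<not> X \<subseteq> column n"
  shows "attached_part n (column n \<inter> X0) (column n \<inter> X1 - X0) (X \<inter> board n) = X \<inter> column n"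
proof -
  have in_board: "(0, n - 1) \<in> board n" "(1, n - 1) \<in> board n" using n by auto
  have unique: "Y = Z" if "Y \<in> P" "Z \<in> P" "u \<in> Y" "u \<in> Z" for Y Z u
    using division_unique_piece[OF P that] .
  show ?thesis
  proof (cases "(0, n - 1) \<in> X")
    case True
    then have "X0 = X" using unique[OF X0(1) X(1) X0(2)] by simp
    moreover have "X1 = X" if "(1, n - 1) \<in> X" using unique[OF X1(1) X(1) X1(2) that] .
    ultimately show ?thesis using True in_board unfolding attached_part_def by auto
  next
    case False
    show ?thesis
    proof (cases "(1, n - 1) \<in> X")
      case True
      then have "X1 = X" using unique[OF X1(1) X(1) X1(2)] by simp
      moreover have "X0 \<inter> X = {}"
        using False X0 X division_unique_piece[OF P X0(1) X(1)] by blast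
      ultimately show ?thesis using True False in_board unfolding attached_part_def by auto
    next
      case neither: False
      have "X \<subseteq> board (Suc n)" using division_subset_board[OF P X(1)] .
      then obtain y where "y \<in> X \<inter> board n" using X(2) board_Suc by blast
      then have "X \<inter> column n = {}"
        using piece_column_entry[OF division_piece[OF P X(1)] \<open>X \<subseteq> board (Suc n)\<close> _ \<open>y \<in> X \<inter> board n\<close>]
          False neither by blast
      then show ?thesis using False neither unfolding attached_part_def by auto
    qed
  qed
qed

lemma restrict_division_is_division:
  assumes P: "is_division (Suc n) k P"
  shows "is_division n (card (restrict_division n P)) (restrict_division n P)"
  unfolding is_division_def
proof (intro conjI ballI impI)
  fix A assume "A \<in> restrict_division n P"
  then obtain X where X: "X \<in> P" "A = X \<inter> board n" "A \<noteq> {}"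
    unfolding restrict_division_def by blast
  then show "is_piece A"
    using is_piece_restrict_board[OF division_piece[OF P X(1)] division_subset_board[OF P X(1)]] by blast
next
  show "\<Union>(restrict_division n P) = board n"
  proof
    show "\<Union>(restrict_division n P) \<subseteq> board n" unfolding restrict_division_def by blast
    show "board n \<subseteq> \<Union>(restrict_division n P)"
    proof
      fix x assume "x \<in> board n"
      then obtain X where "X \<in> P" "x \<in> X" using division_covers[OF P, of x] board_Suc by blast
      then show "x \<in> \<Union>(restrict_division n P)"
        using \<open>x \<in> board n\<close> unfolding restrict_division_def by blast
    qed
  qed
next
  fix A B assume "A \<in> restrict_division n P" "B \<in> restrict_division n P" "A \<noteq> B"
  then show "A \<inter> B = {}"
    using division_unique_piece[OF P] unfolding restrict_division_def by blast
qed simp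

lemma division_decompose:
  assumes n: "n \<ge> 1" and P: "is_division (Suc n) k P"
    and X0: "X0 \<in> P" "(0, n - 1) \<in> X0" and X1: "X1 \<in> P" "(1, n - 1) \<in> X1"
  defines "Q \<equiv> restrict_division n P" and "N \<equiv> {X \<in> P. X \<subseteq> column n}"
  shows "P = extend_division n (column n \<inter> X0) (column n \<inter> X1 - X0) N Q"
    and "k = card Q + card N"
proof -
  let ?att = "attached_part n (column n \<inter> X0) (column n \<inter> X1 - X0)"
  let ?P' = "extend_division n (column n \<inter> X0) (column n \<inter> X1 - X0) N Q"
  have old: "A \<subseteq> board n \<and> A \<noteq> {}" if "A \<in> Q" for A
    using that unfolding Q_def restrict_division_def by blast
  have split: "X = (X \<inter> board n) \<union> ?att (X \<inter> board n)" if X: "X \<in> P" "\<not> X \<subseteq> column n" for X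
  proof -
    have "X \<subseteq> board n \<union> column n" using division_subset_board[OF P X(1)] board_Suc by simp
    then have "X = (X \<inter> board n) \<union> (X \<inter> column n)" by blast
    then show ?thesis using division_attached_part[OF n P X0 X1 X] by simp
  qed
  have restricted: "X \<inter> board n \<in> Q \<longleftrightarrow> \<not> X \<subseteq> column n" if "X \<in> P" for X
  proof -
    have "X \<subseteq> board n \<union> column n" using division_subset_board[OF P that] board_Suc by simp
    then show ?thesis using that column_board_disjoint[of n] unfolding Q_def restrict_division_def by blast
  qed
  show eq: "P = ?P'"
  proof
    show "P \<subseteq> ?P'"
    proof
      fix X assume X: "X \<in> P"
      show "X \<in> ?P'"
      proof (cases "X \<subseteq> column n")
        case False
        then have "X \<inter> board n \<in> Q" using restricted[OF X] by simp
        then show ?thesis using split[OF X False] unfolding extend_division_def by blast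
      qed (use X in \<open>simp add: extend_division_def N_def\<close>)
    qed
    show "?P' \<subseteq> P"
    proof
      fix Z assume "Z \<in> ?P'"
      then show "Z \<in> P"
      proof (cases rule: extend_division_cases)
        case (2 A)
        then obtain X where X: "X \<in> P" "A = X \<inter> board n"
          unfolding Q_def restrict_division_def by blast
        then have "\<not> X \<subseteq> column n" using restricted 2(1) by blast
        then have "Z = X" using split[OF X(1)] X(2) 2(2) by simp
        then show ?thesis using X(1) by simp
      qed (simp add: N_def)
    qed
  qed
  have "finite Q" using restrict_division_is_division[OF P] division_finite unfolding Q_def by blast
  moreover have "finite N" using division_finite[OF P] unfolding N_def by simp
  ultimately have "card ?P' = card Q + card N"
    by (intro card_extend_division) (use old in \<open>auto simp: N_def\<close>)
  then show "k = card Q + card N" using division_card[OF P] eq by simp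
qed

lemma extend_division_swap:
  assumes Q: "is_division n k Q" and C: "C \<in> Q" "(0, n - 1) \<in> C" "(1, n - 1) \<in> C"
    and e: "e0 \<union> e1 = e0' \<union> e1'"
  shows "extend_division n e0 e1 N Q = extend_division n e0' e1' N Q"
proof -
  have "attached_part n e0 e1 A = attached_part n e0' e1' A" if "A \<in> Q" for A
  proof -
    have "(0, n - 1) \<in> A \<longleftrightarrow> A = C" "(1, n - 1) \<in> A \<longleftrightarrow> A = C"
      using division_unique_piece[OF Q that C(1)] C by blast+
    then show ?thesis unfolding attached_part_def using e by auto
  qed
  then show ?thesis unfolding extend_division_def by (metis (no_types, lifting) image_cong)
qed

lemma last_column_split_Suc_iff:
  "last_column_split (Suc n) P \<longleftrightarrow> (\<forall>X\<in>P. \<not> column n \<subseteq> X)"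
  unfolding last_column_split_def column_def by simp

lemma last_column_split_restrict_division:
  assumes "n \<ge> 1"
  shows "last_column_split n (restrict_division n P) \<longleftrightarrow>
    (\<forall>X\<in>P. \<not> ((0, n - 1) \<in> X \<and> (1, n - 1) \<in> X))"
proof
  assume sp: "last_column_split n (restrict_division n P)"
  show "\<forall>X\<in>P. \<not> ((0, n - 1) \<in> X \<and> (1, n - 1) \<in> X)"
  proof (intro ballI notI)
    fix X assume X: "X \<in> P" "(0, n - 1) \<in> X \<and> (1, n - 1) \<in> X"
    then have in_A: "(0, n - 1) \<in> X \<inter> board n" "(1, n - 1) \<in> X \<inter> board n" using assms by auto
    then have "X \<inter> board n \<in> restrict_division n P"
      using X(1) unfolding restrict_division_def by blast
    with sp have "\<not> ((0, n - 1) \<in> X \<inter> board n \<and> (1, n - 1) \<in> X \<inter> board n)"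
      unfolding last_column_split_def by (rule bspec)
    then show False using in_A by blast
  qed
next
  assume joined: "\<forall>X\<in>P. \<not> ((0, n - 1) \<in> X \<and> (1, n - 1) \<in> X)"
  show "last_column_split n (restrict_division n P)"
    unfolding last_column_split_def
  proof (intro ballI notI)
    fix A assume A: "A \<in> restrict_division n P" "(0, n - 1) \<in> A \<and> (1, n - 1) \<in> A"
    then obtain X where "X \<in> P" "A = X \<inter> board n" unfolding restrict_division_def by blast
    then show False using joined A(2) by blast
  qed
qed

lemma last_column_split_extend_division:
  assumes Q: "is_division n k Q" and N: "\<And>X. X \<in> N \<Longrightarrow> \<not> column n \<subseteq> X"
    and attached: "\<And>A. A \<in> Q \<Longrightarrow> \<not> column n \<subseteq> attached_part n e0 e1 A"
  shows "last_column_split (Suc n) (extend_division n e0 e1 N Q)"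
  unfolding last_column_split_Suc_iff
proof
  fix X assume "X \<in> extend_division n e0 e1 N Q"
  then show "\<not> column n \<subseteq> X"
  proof (cases rule: extend_division_cases)
    case (2 A)
    have "A \<inter> column n = {}" using division_subset_board[OF Q 2(1)] column_board_disjoint by blast
    then show ?thesis using attached[OF 2(1)] 2(2) by blast
  qed (use N in blast)
qed

section \<open>Divisions classified by their last column\<close>

definition divisions :: "nat \<Rightarrow> nat \<Rightarrow> (nat \<times> nat) set set set" where
  "divisions n k = {P. is_division n k P}"

definition split_divisions :: "nat \<Rightarrow> nat \<Rightarrow> (nat \<times> nat) set set set" where
  "split_divisions n k = {P \<in> divisions n k. last_column_split n P}"

definition joined_divisions :: "nat \<Rightarrow> nat \<Rightarrow> (nat \<times> nat) set set set" where
  "joined_divisions n k = {P \<in> divisions n k. \<not> last_column_split n P}"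

lemma finite_divisions: "finite (divisions n k)"
  unfolding divisions_def is_division_def
  by (rule finite_subset[of _ "Pow (Pow (board n))"]) (auto simp: finite_board)

lemma card_divisions_joined_split: "card (divisions n k) = card (joined_divisions n k) + card (split_divisions n k)"
proof -
  have "divisions n k = joined_divisions n k \<union> split_divisions n k"
    "joined_divisions n k \<inter> split_divisions n k = {}"
    unfolding joined_divisions_def split_divisions_def by auto
  moreover have "finite (joined_divisions n k)" "finite (split_divisions n k)"
    using finite_divisions unfolding joined_divisions_def split_divisions_def by auto
  ultimately show ?thesis by (simp add: card_Un_disjoint)
qed

lemma card_extend_division_image:
  assumes "e0 \<union> e1 \<subseteq> column n" "\<And>X. X \<in> N \<Longrightarrow> X \<subseteq> column n" "S \<subseteq> divisions n k"
  shows "card (extend_division n e0 e1 N ` S) = card S"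
proof (rule card_image, rule inj_on_inverseI[where g = "restrict_division n"])
  fix Q assume "Q \<in> S"
  then have Q: "is_division n k Q" using assms(3) unfolding divisions_def by blast
  show "restrict_division n (extend_division n e0 e1 N Q) = Q"
    by (rule restrict_extend_division)
      (use assms(1,2) division_subset_board[OF Q] division_nonempty[OF Q] in auto)
qed

lemma not_last_column_split_extend_division:
  assumes n: "n \<ge> 1" and Q: "is_division n k Q"
    and column: "column n \<subseteq> e0 \<or> column n \<subseteq> e1 \<or> column n \<in> N"
  shows "\<not> last_column_split (Suc n) (extend_division n e0 e1 N Q)"
proof -
  obtain A0 A1 where A0: "A0 \<in> Q" "(0, n - 1) \<in> A0" and A1: "A1 \<in> Q" "(1, n - 1) \<in> A1"
    using division_covers[OF Q, of "(0, n - 1)"] division_covers[OF Q, of "(1, n - 1)"] n by auto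
  have "A0 \<union> attached_part n e0 e1 A0 \<in> extend_division n e0 e1 N Q"
    "A1 \<union> attached_part n e0 e1 A1 \<in> extend_division n e0 e1 N Q"
    using A0(1) A1(1) unfolding extend_division_def by blast+
  moreover have "e0 \<subseteq> attached_part n e0 e1 A0" "e1 \<subseteq> attached_part n e0 e1 A1"
    using A0(2) A1(2) unfolding attached_part_def by auto
  moreover have "column n \<in> N \<Longrightarrow> column n \<in> extend_division n e0 e1 N Q"
    unfolding extend_division_def by blast
  ultimately show ?thesis unfolding last_column_split_Suc_iff using column by blast
qed

lemma extend_new_column_joined:
  assumes n: "n \<ge> 1" and Q: "Q \<in> divisions n j"
  shows "extend_division n {} {} {column n} Q \<in> joined_divisions (Suc n) (Suc j)"
proof -
  have Q: "is_division n j Q" using Q unfolding divisions_def by simp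
  have "is_division (Suc n) (j + card {column n}) (extend_division n {} {} {column n} Q)"
    by (rule is_division_extend[OF n Q]) (auto simp: is_piece_column)
  then show ?thesis
    using not_last_column_split_extend_division[OF n Q]
    unfolding joined_divisions_def divisions_def by simp
qed

lemma extend_top_column_joined:
  assumes n: "n \<ge> 1" and Q: "Q \<in> divisions n (Suc j)"
  shows "extend_division n (column n) {} {} Q \<in> joined_divisions (Suc n) (Suc j)"
proof -
  have Q: "is_division n (Suc j) Q" using Q unfolding divisions_def by simp
  have "is_division (Suc n) (Suc j + card ({} :: (nat \<times> nat) set set)) (extend_division n (column n) {} {} Q)"
    by (rule is_division_extend[OF n Q]) (auto simp: column_def)
  then show ?thesis
    using not_last_column_split_extend_division[OF n Q]
    unfolding joined_divisions_def divisions_def by simp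
qed

lemma extend_bottom_column_joined:
  assumes n: "n \<ge> 1" and Q: "Q \<in> split_divisions n (Suc j)"
  shows "extend_division n {} (column n) {} Q \<in> joined_divisions (Suc n) (Suc j)"
proof -
  have Q: "is_division n (Suc j) Q" using Q unfolding split_divisions_def divisions_def by simp
  have "is_division (Suc n) (Suc j + card ({} :: (nat \<times> nat) set set)) (extend_division n {} (column n) {} Q)"
    by (rule is_division_extend[OF n Q]) (auto simp: column_def)
  then show ?thesis
    using not_last_column_split_extend_division[OF n Q]
    unfolding joined_divisions_def divisions_def by simp
qed

context
  fixes n k P X X0 X1
  assumes n: "n \<ge> 1" and P: "is_division (Suc n) k P" and X: "X \<in> P" "column n \<subseteq> X"
    and X0: "X0 \<in> P" "(0, n - 1) \<in> X0" and X1: "X1 \<in> P" "(1, n - 1) \<in> X1"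
begin

lemma joined_Suc_other_piece:
  assumes "Y \<in> P" "Y \<noteq> X"
  shows "column n \<inter> Y = {}"
  using division_disjoint[OF P assms(1) X(1) assms(2)] X(2) by blast

lemma joined_Suc_column_pieces:
  assumes "Y \<in> P" "Y \<subseteq> column n"
  shows "Y = X"
proof (rule ccontr)
  assume "Y \<noteq> X"
  then have "Y = {}" using joined_Suc_other_piece[OF assms(1)] assms(2) by blast
  then show False using division_nonempty[OF P assms(1)] by simp
qed

lemma joined_Suc_new_column:
  assumes "X \<subseteq> column n"
  shows "P = extend_division n {} {} {column n} (restrict_division n P)"
    and "k = Suc (card (restrict_division n P))"
proof -
  have X_eq: "X = column n" using assms X(2) by blast
  have "(i, n - 1) \<notin> column n" for i using n unfolding column_def by auto
  then have "X0 \<noteq> X" "X1 \<noteq> X" using X0(2) X1(2) X_eq by blast+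
  then have e: "column n \<inter> X0 = {}" "column n \<inter> X1 - X0 = {}"
    using joined_Suc_other_piece[OF X0(1)] joined_Suc_other_piece[OF X1(1)] by blast+
  have N: "{Y \<in> P. Y \<subseteq> column n} = {column n}"
  proof
    show "{Y \<in> P. Y \<subseteq> column n} \<subseteq> {column n}" using joined_Suc_column_pieces X_eq by blast
    show "{column n} \<subseteq> {Y \<in> P. Y \<subseteq> column n}" using X(1) X_eq by simp
  qed
  show "P = extend_division n {} {} {column n} (restrict_division n P)"
    using division_decompose(1)[OF n P X0 X1] unfolding e N .
  show "k = Suc (card (restrict_division n P))"
    using division_decompose(2)[OF n P X0 X1] unfolding N by simp
qed

lemma joined_Suc_no_column_piece:
  assumes "\<not> X \<subseteq> column n"
  shows "{Y \<in> P. Y \<subseteq> column n} = {}"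
  using joined_Suc_column_pieces assms by auto

lemma joined_Suc_top:
  assumes "\<not> X \<subseteq> column n" "(0, n - 1) \<in> X"
  shows "P = extend_division n (column n) {} {} (restrict_division n P)"
    and "k = card (restrict_division n P)"
proof -
  have "X0 = X" using division_unique_piece[OF P X0(1) X(1) X0(2) assms(2)] .
  then have e: "column n \<inter> X0 = column n" "column n \<inter> X1 - X0 = {}" using X(2) by blast+
  show "P = extend_division n (column n) {} {} (restrict_division n P)"
    using division_decompose(1)[OF n P X0 X1] unfolding e joined_Suc_no_column_piece[OF assms(1)] .
  show "k = card (restrict_division n P)"
    using division_decompose(2)[OF n P X0 X1] unfolding joined_Suc_no_column_piece[OF assms(1)] by simp
qed

lemma joined_Suc_bottom:
  assumes "\<not> X \<subseteq> column n" "(0, n - 1) \<notin> X"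
  shows "P = extend_division n {} (column n) {} (restrict_division n P)"
    and "k = card (restrict_division n P)"
    and "last_column_split n (restrict_division n P)"
proof -
  obtain y where "y \<in> X \<inter> board n" using assms(1) division_subset_board[OF P X(1)] board_Suc by blast
  then have "(1, n - 1) \<in> X"
    using piece_column_entry[OF division_piece[OF P X(1)] division_subset_board[OF P X(1)]] X(2) assms(2)
    unfolding column_def by blast
  then have "X1 = X" using division_unique_piece[OF P X1(1) X(1) X1(2)] by simp
  moreover have "column n \<inter> X0 = {}" using joined_Suc_other_piece[OF X0(1)] X0(2) assms(2) by blast
  ultimately have e: "column n \<inter> X0 = {}" "column n \<inter> X1 - X0 = column n" using X(2) by blast+
  show "P = extend_division n {} (column n) {} (restrict_division n P)"
    using division_decompose(1)[OF n P X0 X1] unfolding e joined_Suc_no_column_piece[OF assms(1)] .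
  show "k = card (restrict_division n P)"
    using division_decompose(2)[OF n P X0 X1] unfolding joined_Suc_no_column_piece[OF assms(1)] by simp
  show "last_column_split n (restrict_division n P)"
    unfolding last_column_split_restrict_division[OF n]
    using division_unique_piece[OF P _ X(1) _ \<open>(1, n - 1) \<in> X\<close>] assms(2) by blast
qed

end

lemma joined_divisions_Suc_cases:
  assumes n: "n \<ge> 1" and "P \<in> joined_divisions (Suc n) (Suc j)"
  shows "P \<in> extend_division n {} {} {column n} ` divisions n j \<union>
    extend_division n (column n) {} {} ` divisions n (Suc j) \<union>
    extend_division n {} (column n) {} ` split_divisions n (Suc j)"
proof -
  have P: "is_division (Suc n) (Suc j) P" and "\<not> last_column_split (Suc n) P"
    using assms(2) unfolding joined_divisions_def divisions_def by auto
  then obtain X where X: "X \<in> P" "column n \<subseteq> X" unfolding last_column_split_Suc_iff by blast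
  have "(0, n - 1) \<in> board (Suc n)" "(1, n - 1) \<in> board (Suc n)" by auto
  then obtain X0 X1 where pieces: "X0 \<in> P" "(0, n - 1) \<in> X0" "X1 \<in> P" "(1, n - 1) \<in> X1"
    using division_covers[OF P] by meson
  let ?Q = "restrict_division n P"
  have Q: "?Q \<in> divisions n (card ?Q)"
    using restrict_division_is_division[OF P] unfolding divisions_def by simp
  note facts = n P X pieces
  consider "X \<subseteq> column n" | "\<not> X \<subseteq> column n" "(0, n - 1) \<in> X" | "\<not> X \<subseteq> column n" "(0, n - 1) \<notin> X"
    by blast
  then show ?thesis
  proof cases
    case 1
    then have "card ?Q = j" using joined_Suc_new_column(2)[OF facts 1] by simp
    then have "P \<in> extend_division n {} {} {column n} ` divisions n j"
      using joined_Suc_new_column(1)[OF facts 1] Q by (metis image_eqI)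
    then show ?thesis by blast
  next
    case 2
    then have "card ?Q = Suc j" using joined_Suc_top(2)[OF facts 2] by simp
    then have "P \<in> extend_division n (column n) {} {} ` divisions n (Suc j)"
      using joined_Suc_top(1)[OF facts 2] Q by (metis image_eqI)
    then show ?thesis by blast
  next
    case 3
    then have "?Q \<in> split_divisions n (Suc j)"
      using joined_Suc_bottom(2,3)[OF facts 3] Q unfolding split_divisions_def by simp
    then have "P \<in> extend_division n {} (column n) {} ` split_divisions n (Suc j)"
      using joined_Suc_bottom(1)[OF facts 3] by (metis image_eqI)
    then show ?thesis by blast
  qed
qed

lemma divisions_pieceD: "Q \<in> divisions n k \<Longrightarrow> A \<in> Q \<Longrightarrow> A \<subseteq> board n \<and> A \<noteq> {}"
  unfolding divisions_def using division_subset_board division_nonempty by blast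

lemma split_divisions_subset: "split_divisions n k \<subseteq> divisions n k"
  unfolding split_divisions_def by blast

lemma extend_division_images_disjoint:
  assumes "S \<subseteq> divisions n k" "S' \<subseteq> divisions n k'"
    and "e0 \<union> e1 \<subseteq> column n" "e0' \<union> e1' \<subseteq> column n"
    and "\<And>X. X \<in> N \<Longrightarrow> X \<subseteq> column n" "\<And>X. X \<in> N' \<Longrightarrow> X \<subseteq> column n" and "N \<noteq> N'"
  shows "extend_division n e0 e1 N ` S \<inter> extend_division n e0' e1' N' ` S' = {}"
proof (rule ccontr)
  assume "extend_division n e0 e1 N ` S \<inter> extend_division n e0' e1' N' ` S' \<noteq> {}"
  then obtain Q Q' where "Q \<in> S" "Q' \<in> S'"
    and eq: "extend_division n e0 e1 N Q = extend_division n e0' e1' N' Q'" by blast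
  then have "N = N'"
    using extend_division_eqD(2)[OF _ _ assms(5,6,3,4) eq] divisions_pieceD assms(1,2) by blast
  then show False using assms(7) by contradiction
qed

lemma extend_top_bottom_images_disjoint:
  assumes n: "n \<ge> 1"
  shows "extend_division n (column n) {} {} ` divisions n k \<inter>
    extend_division n {} (column n) {} ` split_divisions n k = {}"
proof (rule ccontr)
  assume "extend_division n (column n) {} {} ` divisions n k \<inter>
    extend_division n {} (column n) {} ` split_divisions n k \<noteq> {}"
  then obtain Q Q' where Q: "Q \<in> divisions n k" and Q': "Q' \<in> split_divisions n k"
    and eq: "extend_division n (column n) {} {} Q = extend_division n {} (column n) {} Q'" by blast
  have Q'_div: "Q' \<in> divisions n k" using Q' split_divisions_subset by blast
  note eqD = extend_division_eqD[OF divisions_pieceD[OF Q] divisions_pieceD[OF Q'_div] _ _ _ _ eq]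
  have "Q = Q'" by (rule eqD(1)) auto
  obtain A where A: "A \<in> Q" "(0, n - 1) \<in> A"
    using division_covers[of n k Q "(0, n - 1)"] Q n unfolding divisions_def by auto
  then have "(1, n - 1) \<notin> A"
    using Q' \<open>Q = Q'\<close> unfolding split_divisions_def last_column_split_def by blast
  have "attached_part n (column n) {} A = attached_part n {} (column n) A"
    by (rule eqD(3)) (use A(1) in auto)
  then show False using A(2) \<open>(1, n - 1) \<notin> A\<close> unfolding attached_part_def column_def by simp
qed

lemma card_joined_divisions_Suc:
  assumes n: "n \<ge> 1"
  shows "card (joined_divisions (Suc n) (Suc j)) =
    card (divisions n j) + card (divisions n (Suc j)) + card (split_divisions n (Suc j))"
proof -
  let ?I1 = "extend_division n {} {} {column n} ` divisions n j"
  let ?I2 = "extend_division n (column n) {} {} ` divisions n (Suc j)"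
  let ?I3 = "extend_division n {} (column n) {} ` split_divisions n (Suc j)"
  have eq: "joined_divisions (Suc n) (Suc j) = ?I1 \<union> ?I2 \<union> ?I3"
  proof
    show "joined_divisions (Suc n) (Suc j) \<subseteq> ?I1 \<union> ?I2 \<union> ?I3"
      using joined_divisions_Suc_cases[OF n] by (rule subsetI)
    have "?I1 \<subseteq> joined_divisions (Suc n) (Suc j)"
      by (rule image_subsetI, rule extend_new_column_joined[OF n])
    moreover have "?I2 \<subseteq> joined_divisions (Suc n) (Suc j)"
      by (rule image_subsetI, rule extend_top_column_joined[OF n])
    moreover have "?I3 \<subseteq> joined_divisions (Suc n) (Suc j)"
      by (rule image_subsetI, rule extend_bottom_column_joined[OF n])
    ultimately show "?I1 \<union> ?I2 \<union> ?I3 \<subseteq> joined_divisions (Suc n) (Suc j)" by (intro Un_least)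
  qed
  have "?I1 \<inter> ?I2 = {}"
    by (rule extend_division_images_disjoint[of _ n j _ "Suc j"]) simp_all
  moreover have "?I1 \<inter> ?I3 = {}"
    by (rule extend_division_images_disjoint[of _ n j _ "Suc j"]) (simp_all add: split_divisions_subset)
  ultimately have disjoint: "?I1 \<inter> ?I2 = {}" "(?I1 \<union> ?I2) \<inter> ?I3 = {}"
    using extend_top_bottom_images_disjoint[OF n] by (simp_all add: Int_Un_distrib2)
  have "card ?I1 = card (divisions n j)"
    by (rule card_extend_division_image[where k = j]) simp_all
  moreover have "card ?I2 = card (divisions n (Suc j))"
    by (rule card_extend_division_image[where k = "Suc j"]) simp_all
  moreover have "card ?I3 = card (split_divisions n (Suc j))"
    by (rule card_extend_division_image[where k = "Suc j"]) (simp_all add: split_divisions_subset)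
  moreover have "finite ?I1" "finite ?I2" "finite ?I3"
    using finite_divisions finite_subset[OF split_divisions_subset finite_divisions] by auto
  ultimately show ?thesis unfolding eq using disjoint by (simp add: card_Un_disjoint)
qed

lemma extend_singletons_split:
  assumes n: "n \<ge> 1" and Q: "Q \<in> divisions n j"
  shows "extend_division n {} {} {{(0, n)}, {(1, n)}} Q \<in> split_divisions (Suc n) (Suc (Suc j))"
proof -
  have Q: "is_division n j Q" using Q unfolding divisions_def by simp
  have "is_division (Suc n) (j + card {{(0::nat, n)}, {(1, n)}}) (extend_division n {} {} {{(0, n)}, {(1, n)}} Q)"
    by (rule is_division_extend[OF n Q]) (auto simp: column_def is_piece_singleton)
  moreover have "last_column_split (Suc n) (extend_division n {} {} {{(0, n)}, {(1, n)}} Q)"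
    by (rule last_column_split_extend_division[OF Q]) (auto simp: column_def attached_part_def)
  ultimately show ?thesis unfolding split_divisions_def divisions_def by simp
qed

lemma extend_top_singleton_split:
  assumes n: "n \<ge> 1" and Q: "Q \<in> divisions n (Suc j)"
  shows "extend_division n {} {(1, n)} {{(0, n)}} Q \<in> split_divisions (Suc n) (Suc (Suc j))"
proof -
  have Q: "is_division n (Suc j) Q" using Q unfolding divisions_def by simp
  have "is_division (Suc n) (Suc j + card {{(0::nat, n)}}) (extend_division n {} {(1, n)} {{(0, n)}} Q)"
    by (rule is_division_extend[OF n Q]) (auto simp: column_def is_piece_singleton)
  moreover have "last_column_split (Suc n) (extend_division n {} {(1, n)} {{(0, n)}} Q)"
    by (rule last_column_split_extend_division[OF Q]) (auto simp: column_def attached_part_def)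
  ultimately show ?thesis unfolding split_divisions_def divisions_def by simp
qed

lemma extend_bottom_singleton_split:
  assumes n: "n \<ge> 1" and Q: "Q \<in> divisions n (Suc j)"
  shows "extend_division n {(0, n)} {} {{(1, n)}} Q \<in> split_divisions (Suc n) (Suc (Suc j))"
proof -
  have Q: "is_division n (Suc j) Q" using Q unfolding divisions_def by simp
  have "is_division (Suc n) (Suc j + card {{(1::nat, n)}}) (extend_division n {(0, n)} {} {{(1, n)}} Q)"
    by (rule is_division_extend[OF n Q]) (auto simp: column_def is_piece_singleton)
  moreover have "last_column_split (Suc n) (extend_division n {(0, n)} {} {{(1, n)}} Q)"
    by (rule last_column_split_extend_division[OF Q]) (auto simp: column_def attached_part_def)
  ultimately show ?thesis unfolding split_divisions_def divisions_def by simp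
qed

lemma extend_rows_split:
  assumes n: "n \<ge> 1" and Q: "Q \<in> split_divisions n k"
  shows "extend_division n {(0, n)} {(1, n)} {} Q \<in> split_divisions (Suc n) k"
proof -
  have Q: "is_division n k Q" and split: "last_column_split n Q"
    using Q unfolding split_divisions_def divisions_def by simp_all
  have "is_division (Suc n) (k + card ({} :: (nat \<times> nat) set set)) (extend_division n {(0, n)} {(1, n)} {} Q)"
    by (rule is_division_extend[OF n Q]) (auto simp: column_def)
  moreover have "last_column_split (Suc n) (extend_division n {(0, n)} {(1, n)} {} Q)"
    by (rule last_column_split_extend_division[OF Q])
      (use split in \<open>auto simp: column_def attached_part_def last_column_split_def\<close>)
  ultimately show ?thesis unfolding split_divisions_def divisions_def by simp
qed

context
  fixes n k P Y0 Y1 X0 X1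
  assumes n: "n \<ge> 1" and P: "is_division (Suc n) k P" and split: "last_column_split (Suc n) P"
    and Y0: "Y0 \<in> P" "(0, n) \<in> Y0" and Y1: "Y1 \<in> P" "(1, n) \<in> Y1"
    and X0: "X0 \<in> P" "(0, n - 1) \<in> X0" and X1: "X1 \<in> P" "(1, n - 1) \<in> X1"
begin

lemma split_Suc_other_square: "(1, n) \<notin> Y0" "(0, n) \<notin> Y1"
  using split Y0 Y1 unfolding last_column_split_def by auto

lemma split_Suc_column_inter:
  "column n \<inter> Y0 = {(0, n)}" "column n \<inter> Y1 = {(1, n)}"
  "Z \<in> P \<Longrightarrow> Z \<noteq> Y0 \<Longrightarrow> Z \<noteq> Y1 \<Longrightarrow> column n \<inter> Z = {}"
proof -
  show "column n \<inter> Y0 = {(0, n)}" "column n \<inter> Y1 = {(1, n)}"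
    using Y0(2) Y1(2) split_Suc_other_square unfolding column_def by auto
  assume Z: "Z \<in> P" "Z \<noteq> Y0" "Z \<noteq> Y1"
  have "Z \<inter> Y0 = {}" "Z \<inter> Y1 = {}"
    using division_unique_piece[OF P Z(1) Y0(1)] division_unique_piece[OF P Z(1) Y1(1)] Z(2,3) by blast+
  moreover have "column n \<subseteq> Y0 \<union> Y1" using Y0(2) Y1(2) unfolding column_def by blast
  ultimately show "column n \<inter> Z = {}" by blast
qed

lemma split_Suc_column_pieces: "{X \<in> P. X \<subseteq> column n} = {Y \<in> {Y0, Y1}. Y \<subseteq> column n}"
proof
  show "{X \<in> P. X \<subseteq> column n} \<subseteq> {Y \<in> {Y0, Y1}. Y \<subseteq> column n}"
  proof
    fix Z assume "Z \<in> {X \<in> P. X \<subseteq> column n}"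
    then have "Z \<in> P" "Z \<subseteq> column n" "Z \<noteq> {}" using division_nonempty[OF P] by auto
    then show "Z \<in> {Y \<in> {Y0, Y1}. Y \<subseteq> column n}" using split_Suc_column_inter(3) by blast
  qed
qed (use Y0(1) Y1(1) in blast)

lemma split_Suc_top_cases: "Y0 = {(0, n)} \<or> (Y0 = X0 \<and> \<not> Y0 \<subseteq> column n)"
proof (cases "Y0 \<subseteq> column n")
  case False
  then obtain y where "y \<in> Y0 \<inter> board n" using division_subset_board[OF P Y0(1)] board_Suc by blast
  then have "(0, n - 1) \<in> Y0"
    using piece_column_exit[OF division_piece[OF P Y0(1)] division_subset_board[OF P Y0(1)] Y0(2)]
      split_Suc_other_square(1) by simp
  then show ?thesis using division_unique_piece[OF P Y0(1) X0(1) _ X0(2)] False by blast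
qed (use split_Suc_column_inter(1) in blast)

lemma split_Suc_bottom_cases: "Y1 = {(1, n)} \<or> (Y1 = X1 \<and> \<not> Y1 \<subseteq> column n)"
proof (cases "Y1 \<subseteq> column n")
  case False
  then obtain y where "y \<in> Y1 \<inter> board n" using division_subset_board[OF P Y1(1)] board_Suc by blast
  then have "(1, n - 1) \<in> Y1"
    using piece_column_exit[OF division_piece[OF P Y1(1)] division_subset_board[OF P Y1(1)] Y1(2)]
      split_Suc_other_square(2) by simp
  then show ?thesis using division_unique_piece[OF P Y1(1) X1(1) _ X1(2)] False by blast
qed (use split_Suc_column_inter(2) in blast)

lemma split_Suc_decompose:
  "P = extend_division n (column n \<inter> X0) (column n \<inter> X1 - X0)
     {Y \<in> {Y0, Y1}. Y \<subseteq> column n} (restrict_division n P)"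
  "k = card (restrict_division n P) + card {Y \<in> {Y0, Y1}. Y \<subseteq> column n}"
  using division_decompose[OF n P X0 X1] unfolding split_Suc_column_pieces by simp_all

lemma split_Suc_both_singletons:
  assumes "Y0 = {(0, n)}" "Y1 = {(1, n)}"
  shows "P = extend_division n {} {} {{(0, n)}, {(1, n)}} (restrict_division n P)"
    and "k = card (restrict_division n P) + 2"
proof -
  have "X0 \<noteq> Y0" "X0 \<noteq> Y1" "X1 \<noteq> Y0" "X1 \<noteq> Y1" using X0(2) X1(2) assms n by auto
  then have e: "column n \<inter> X0 = {}" "column n \<inter> X1 - X0 = {}"
    using split_Suc_column_inter(3)[OF X0(1)] split_Suc_column_inter(3)[OF X1(1)] by blast+
  have N: "{Y \<in> {Y0, Y1}. Y \<subseteq> column n} = {{(0, n)}, {(1, n)}}"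
    using assms unfolding column_def by auto
  show "P = extend_division n {} {} {{(0, n)}, {(1, n)}} (restrict_division n P)"
    using split_Suc_decompose(1) unfolding e N .
  show "k = card (restrict_division n P) + 2" using split_Suc_decompose(2) unfolding N by simp
qed

lemma split_Suc_top_singleton:
  assumes "Y0 = {(0, n)}" "Y1 = X1" "\<not> Y1 \<subseteq> column n"
  shows "P = extend_division n {} {(1, n)} {{(0, n)}} (restrict_division n P)"
    and "k = Suc (card (restrict_division n P))"
proof -
  have N: "{Y \<in> {Y0, Y1}. Y \<subseteq> column n} = {{(0, n)}}"
    using assms unfolding column_def by auto
  have e1: "column n \<inter> X1 = {(1, n)}" using split_Suc_column_inter(2) assms(2) by simp
  show "P = extend_division n {} {(1, n)} {{(0, n)}} (restrict_division n P)"
  proof (cases "X0 = X1")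
    case True
    then have e: "column n \<inter> X0 = {(1, n)}" "column n \<inter> X1 - X0 = {}" using e1 by blast+
    have "P = extend_division n {(1, n)} {} {{(0, n)}} (restrict_division n P)"
      using split_Suc_decompose(1) unfolding N e .
    also have "\<dots> = extend_division n {} {(1, n)} {{(0, n)}} (restrict_division n P)"
    proof (rule extend_division_swap[OF restrict_division_is_division[OF P]])
      show "X1 \<inter> board n \<in> restrict_division n P"
        using X1 n unfolding restrict_division_def by auto
      show "(0, n - 1) \<in> X1 \<inter> board n" "(1, n - 1) \<in> X1 \<inter> board n"
        using X0(2) X1(2) True n by auto
    qed simp
    finally show ?thesis .
  next
    case False
    then have "X0 \<noteq> Y0" "X0 \<noteq> Y1" using X0(2) assms(1,2) n by auto
    then have "column n \<inter> X0 = {}" using split_Suc_column_inter(3)[OF X0(1)] by blast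
    then have e: "column n \<inter> X0 = {}" "column n \<inter> X1 - X0 = {(1, n)}" using e1 by blast+
    show ?thesis using split_Suc_decompose(1) unfolding N e .
  qed
  show "k = Suc (card (restrict_division n P))" using split_Suc_decompose(2) unfolding N by simp
qed

lemma split_Suc_bottom_singleton:
  assumes "Y0 = X0" "\<not> Y0 \<subseteq> column n" "Y1 = {(1, n)}"
  shows "P = extend_division n {(0, n)} {} {{(1, n)}} (restrict_division n P)"
    and "k = Suc (card (restrict_division n P))"
proof -
  have N: "{Y \<in> {Y0, Y1}. Y \<subseteq> column n} = {{(1, n)}}"
    using assms unfolding column_def by auto
  have "X1 \<noteq> Y1" using X1(2) assms(3) n by auto
  then have "column n \<inter> X1 \<subseteq> X0"
    using split_Suc_column_inter(3)[OF X1(1)] assms(1) by (cases "X1 = Y0") blast+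
  then have e: "column n \<inter> X0 = {(0, n)}" "column n \<inter> X1 - X0 = {}"
    using split_Suc_column_inter(1) assms(1) by blast+
  show "P = extend_division n {(0, n)} {} {{(1, n)}} (restrict_division n P)"
    using split_Suc_decompose(1) unfolding N e .
  show "k = Suc (card (restrict_division n P))" using split_Suc_decompose(2) unfolding N by simp
qed

lemma split_Suc_no_singleton:
  assumes "Y0 = X0" "\<not> Y0 \<subseteq> column n" "Y1 = X1" "\<not> Y1 \<subseteq> column n"
  shows "P = extend_division n {(0, n)} {(1, n)} {} (restrict_division n P)"
    and "k = card (restrict_division n P)"
    and "last_column_split n (restrict_division n P)"
proof -
  have N: "{Y \<in> {Y0, Y1}. Y \<subseteq> column n} = {}" using assms by auto
  have "(1, n) \<notin> X0" using split_Suc_other_square(1) assms(1) by simp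
  then have e: "column n \<inter> X0 = {(0, n)}" "column n \<inter> X1 - X0 = {(1, n)}"
    using split_Suc_column_inter(1,2) assms(1,3) by blast+
  show "P = extend_division n {(0, n)} {(1, n)} {} (restrict_division n P)"
    using split_Suc_decompose(1) unfolding N e .
  show "k = card (restrict_division n P)" using split_Suc_decompose(2) unfolding N by simp
  have "X0 \<noteq> X1" using Y0(2) split_Suc_other_square(2) assms(1,3) by blast
  then show "last_column_split n (restrict_division n P)"
    unfolding last_column_split_restrict_division[OF n]
    using division_unique_piece[OF P _ X0(1) _ X0(2)] division_unique_piece[OF P _ X1(1) _ X1(2)]
    by blast
qed

end

lemma split_divisions_Suc_cases:
  assumes n: "n \<ge> 1" and "P \<in> split_divisions (Suc n) (Suc (Suc j))"
  shows "P \<in> extend_division n {} {} {{(0, n)}, {(1, n)}} ` divisions n j \<union>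
    extend_division n {} {(1, n)} {{(0, n)}} ` divisions n (Suc j) \<union>
    extend_division n {(0, n)} {} {{(1, n)}} ` divisions n (Suc j) \<union>
    extend_division n {(0, n)} {(1, n)} {} ` split_divisions n (Suc (Suc j))"
proof -
  have P: "is_division (Suc n) (Suc (Suc j)) P" and split: "last_column_split (Suc n) P"
    using assms(2) unfolding split_divisions_def divisions_def by auto
  have "(0, n) \<in> board (Suc n)" "(1, n) \<in> board (Suc n)"
    "(0, n - 1) \<in> board (Suc n)" "(1, n - 1) \<in> board (Suc n)" by auto
  then obtain Y0 Y1 X0 X1 where pieces: "Y0 \<in> P" "(0, n) \<in> Y0" "Y1 \<in> P" "(1, n) \<in> Y1"
    "X0 \<in> P" "(0, n - 1) \<in> X0" "X1 \<in> P" "(1, n - 1) \<in> X1"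
    using division_covers[OF P] by meson
  let ?Q = "restrict_division n P"
  have Q: "?Q \<in> divisions n (card ?Q)"
    using restrict_division_is_division[OF P] unfolding divisions_def by simp
  note facts = n P split pieces
  consider "Y0 = {(0, n)}" "Y1 = {(1, n)}"
    | "Y0 = {(0, n)}" "Y1 = X1" "\<not> Y1 \<subseteq> column n"
    | "Y0 = X0" "\<not> Y0 \<subseteq> column n" "Y1 = {(1, n)}"
    | "Y0 = X0" "\<not> Y0 \<subseteq> column n" "Y1 = X1" "\<not> Y1 \<subseteq> column n"
    using split_Suc_top_cases[OF facts] split_Suc_bottom_cases[OF facts] by blast
  then show ?thesis
  proof cases
    case 1
    then show ?thesis using split_Suc_both_singletons[OF facts 1] Q by force
  next
    case 2
    then show ?thesis using split_Suc_top_singleton[OF facts 2] Q by force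
  next
    case 3
    then show ?thesis using split_Suc_bottom_singleton[OF facts 3] Q by force
  next
    case 4
    then show ?thesis using split_Suc_no_singleton[OF facts 4] Q
      unfolding split_divisions_def by force
  qed
qed

lemma card_split_divisions_Suc:
  assumes n: "n \<ge> 1"
  shows "card (split_divisions (Suc n) (Suc (Suc j))) =
    card (divisions n j) + 2 * card (divisions n (Suc j)) + card (split_divisions n (Suc (Suc j)))"
proof -
  let ?I1 = "extend_division n {} {} {{(0, n)}, {(1, n)}} ` divisions n j"
  let ?I2 = "extend_division n {} {(1, n)} {{(0, n)}} ` divisions n (Suc j)"
  let ?I3 = "extend_division n {(0, n)} {} {{(1, n)}} ` divisions n (Suc j)"
  let ?I4 = "extend_division n {(0, n)} {(1, n)} {} ` split_divisions n (Suc (Suc j))"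
  have eq: "split_divisions (Suc n) (Suc (Suc j)) = ?I1 \<union> ?I2 \<union> ?I3 \<union> ?I4"
  proof
    show "split_divisions (Suc n) (Suc (Suc j)) \<subseteq> ?I1 \<union> ?I2 \<union> ?I3 \<union> ?I4"
      using split_divisions_Suc_cases[OF n] by (rule subsetI)
    have "?I1 \<subseteq> split_divisions (Suc n) (Suc (Suc j))"
      by (rule image_subsetI, rule extend_singletons_split[OF n])
    moreover have "?I2 \<subseteq> split_divisions (Suc n) (Suc (Suc j))"
      by (rule image_subsetI, rule extend_top_singleton_split[OF n])
    moreover have "?I3 \<subseteq> split_divisions (Suc n) (Suc (Suc j))"
      by (rule image_subsetI, rule extend_bottom_singleton_split[OF n])
    moreover have "?I4 \<subseteq> split_divisions (Suc n) (Suc (Suc j))"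
      by (rule image_subsetI, rule extend_rows_split[OF n])
    ultimately show "?I1 \<union> ?I2 \<union> ?I3 \<union> ?I4 \<subseteq> split_divisions (Suc n) (Suc (Suc j))"
      by (intro Un_least)
  qed
  have "?I1 \<inter> ?I2 = {}"
    by (rule extend_division_images_disjoint[of _ n j _ "Suc j"]) (auto simp: column_def)
  moreover have "?I1 \<inter> ?I3 = {}"
    by (rule extend_division_images_disjoint[of _ n j _ "Suc j"]) (auto simp: column_def)
  moreover have "?I2 \<inter> ?I3 = {}"
    by (rule extend_division_images_disjoint[of _ n "Suc j" _ "Suc j"]) (auto simp: column_def)
  moreover have "?I1 \<inter> ?I4 = {}"
    by (rule extend_division_images_disjoint[of _ n j _ "Suc (Suc j)"])
      (auto simp: column_def split_divisions_subset)
  moreover have "?I2 \<inter> ?I4 = {}"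
    by (rule extend_division_images_disjoint[of _ n "Suc j" _ "Suc (Suc j)"])
      (auto simp: column_def split_divisions_subset)
  moreover have "?I3 \<inter> ?I4 = {}"
    by (rule extend_division_images_disjoint[of _ n "Suc j" _ "Suc (Suc j)"])
      (auto simp: column_def split_divisions_subset)
  ultimately have disjoint: "?I1 \<inter> ?I2 = {}" "(?I1 \<union> ?I2) \<inter> ?I3 = {}" "(?I1 \<union> ?I2 \<union> ?I3) \<inter> ?I4 = {}"
    by (simp_all add: Int_Un_distrib2)
  have "card ?I1 = card (divisions n j)"
    by (rule card_extend_division_image[where k = j]) (auto simp: column_def)
  moreover have "card ?I2 = card (divisions n (Suc j))"
    by (rule card_extend_division_image[where k = "Suc j"]) (simp_all add: column_def)
  moreover have "card ?I3 = card (divisions n (Suc j))"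
    by (rule card_extend_division_image[where k = "Suc j"]) (simp_all add: column_def)
  moreover have "card ?I4 = card (split_divisions n (Suc (Suc j)))"
    by (rule card_extend_division_image[where k = "Suc (Suc j)"])
      (simp_all add: column_def split_divisions_subset)
  moreover have "finite ?I1" "finite ?I2" "finite ?I3" "finite ?I4"
    using finite_divisions finite_subset[OF split_divisions_subset finite_divisions] by auto
  ultimately show ?thesis unfolding eq using disjoint by (simp add: card_Un_disjoint)
qed

section \<open>Closed forms\<close>

lemma board_0: "board 0 = {}"
  unfolding board_def by simp

lemma is_piece_board: "n \<ge> 1 \<Longrightarrow> is_piece (board n)"
proof (induction n rule: nat_induct_at_least)
  case base
  show ?case using is_piece_column[of 0] by (simp add: board_Suc board_0)
next
  case (Suc n)
  have "is_piece (board n \<union> column n)"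
    by (rule is_piece_union_column[OF Suc.IH Suc.hyps]) (use Suc.hyps in auto)
  then show ?case by (simp add: board_Suc)
qed

lemma divisions_zero:
  assumes "n \<ge> 1"
  shows "divisions n 0 = {}"
proof -
  have "\<not> is_division n 0 P" for P
  proof
    assume P: "is_division n 0 P"
    then have "P = {}" using division_finite[OF P] division_card[OF P] by simp
    moreover have "(0, 0) \<in> board n" using assms by simp
    ultimately show False using division_covers[OF P] by blast
  qed
  then show ?thesis unfolding divisions_def by blast
qed

lemma divisions_one:
  assumes "n \<ge> 1"
  shows "divisions n 1 = {{board n}}"
proof
  show "divisions n 1 \<subseteq> {{board n}}"
  proof
    fix P assume "P \<in> divisions n 1"
    then have P: "is_division n 1 P" unfolding divisions_def by simp
    then obtain A where "P = {A}" using division_card[OF P] card_1_singletonE by blast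
    moreover have "\<Union>P = board n" using P unfolding is_division_def by blast
    ultimately show "P \<in> {{board n}}" by simp
  qed
  show "{{board n}} \<subseteq> divisions n 1"
    using is_piece_board[OF assms] unfolding divisions_def is_division_def by simp
qed

lemma split_divisions_one:
  assumes "n \<ge> 1"
  shows "split_divisions n 1 = {}"
proof -
  have "(0, n - 1) \<in> board n" "(1, n - 1) \<in> board n" using assms by auto
  then show ?thesis unfolding split_divisions_def divisions_one[OF assms] last_column_split_def by blast
qed

lemma board_1: "board 1 = {(0, 0), (1, 0)}"
  by (simp add: board_Suc[of 0, simplified] board_0 column_def)

lemma division_card_le: "is_division n k P \<Longrightarrow> k \<le> card (board n)"
proof -
  assume P: "is_division n k P"
  have "\<Union>P = board n" using P unfolding is_division_def by simp
  moreover have "pairwise disjnt P"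
    using P unfolding is_division_def pairwise_def disjnt_def by simp
  ultimately have "card (board n) = (\<Sum>A\<in>P. card A)"
    using card_Union_disjoint[of P] finite_subset[OF division_subset_board[OF P] finite_board] by simp
  also have "\<dots> \<ge> (\<Sum>A\<in>P. 1)"
    using division_nonempty[OF P] finite_subset[OF division_subset_board[OF P] finite_board]
    by (intro sum_mono) (simp add: Suc_leI card_gt_0_iff)
  finally show "k \<le> card (board n)" using division_card[OF P] by simp
qed

lemma partition_of_pair:
  assumes "A \<union> B = {x, y}" "A \<inter> B = {}" "A \<noteq> {}" "B \<noteq> {}"
  shows "{A, B} = {{x}, {y}}"
proof -
  have sub: "A \<subseteq> {x, y}" "B \<subseteq> {x, y}" using assms(1) by blast+
  have singleton: "C = {u}" if "C \<subseteq> {u, v}" "v \<notin> C" "C \<noteq> {}" for C u v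
    using that by blast
  show ?thesis
  proof (cases "x \<in> A")
    case True
    then have "x \<notin> B" using assms(2) by blast
    then have "B = {y}" using singleton[OF _ _ assms(4), of y x] sub(2) by (simp add: insert_commute)
    then have "y \<notin> A" using assms(2) by blast
    then have "A = {x}" using singleton[OF sub(1) _ assms(3)] by simp
    then show ?thesis using \<open>B = {y}\<close> by simp
  next
    case False
    then have "A = {y}" using singleton[OF _ _ assms(3), of y x] sub(1) by (simp add: insert_commute)
    moreover have "x \<in> B" using False assms(1) by blast
    then have "B = {x}" using singleton[OF sub(2) _ assms(4)] \<open>A = {y}\<close> assms(2) by blast
    ultimately show ?thesis by (simp add: insert_commute)
  qed
qed

lemma divisions_1_2: "divisions 1 2 = {{{(0, 0)}, {(1, 0)}}}"
proof
  show "divisions 1 2 \<subseteq> {{{(0, 0)}, {(1, 0)}}}"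
  proof
    fix P assume "P \<in> divisions 1 2"
    then have P: "is_division 1 2 P" unfolding divisions_def by simp
    then obtain A B where AB: "P = {A, B}" "A \<noteq> B" using division_card[OF P] card_2_iff by metis
    have "A \<union> B = {(0, 0), (1, 0)}"
      using P AB(1) board_1 unfolding is_division_def by simp
    moreover have "A \<inter> B = {}" using P AB unfolding is_division_def by simp
    moreover have "A \<noteq> {}" "B \<noteq> {}" using division_nonempty[OF P] AB(1) by simp_all
    ultimately show "P \<in> {{{(0, 0)}, {(1, 0)}}}" using partition_of_pair AB(1) by simp
  qed
  have "is_division 1 2 {{(0, 0)}, {(1, 0)}}"
    unfolding is_division_def board_1 by (simp add: is_piece_singleton insert_commute)
  then show "{{{(0, 0)}, {(1, 0)}}} \<subseteq> divisions 1 2" unfolding divisions_def by simp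
qed

lemma divisions_1_3: "divisions 1 3 = {}"
proof -
  have "card (board 1) = 2" unfolding board_1 by simp
  then show ?thesis using division_card_le[of 1 3] unfolding divisions_def by fastforce
qed

lemma card_divisions_two_three:
  assumes "n \<ge> 1"
  shows "real (card (split_divisions n 2)) = 2 * real n - 1 \<and>
    real (card (divisions n 2)) = 2 * real n ^ 2 - real n \<and>
    real (card (split_divisions n 3)) = 4/3 * real n ^ 3 - 3 * real n ^ 2 + 8/3 * real n - 1 \<and>
    real (card (divisions n 3)) = 2/3 * real n ^ 4 - 4/3 * real n ^ 3 + 11/6 * real n ^ 2
      - 13/6 * real n + 1"
  using assms
proof (induction n rule: nat_induct_at_least)
  case base
  have "split_divisions 1 2 = divisions 1 2"
    unfolding split_divisions_def divisions_1_2 last_column_split_def by auto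
  moreover have "split_divisions 1 3 = {}" using split_divisions_subset divisions_1_3 by blast
  ultimately have "card (divisions 1 2) = 1" "card (split_divisions 1 2) = 1"
    "card (divisions 1 3) = 0" "card (split_divisions 1 3) = 0"
    unfolding divisions_1_2 divisions_1_3 by simp_all
  then show ?case by simp
next
  case (Suc n)
  let ?D = "\<lambda>k. real (card (divisions n k))" and ?S = "\<lambda>k. real (card (split_divisions n k))"
  have small: "?D 0 = 0" "?D 1 = 1" "?S 1 = 0"
    using divisions_zero divisions_one split_divisions_one Suc.hyps by simp_all
  have rec_S: "real (card (split_divisions (Suc n) 2)) = ?D 0 + 2 * ?D 1 + ?S 2"
    "real (card (split_divisions (Suc n) 3)) = ?D 1 + 2 * ?D 2 + ?S 3"
    using card_split_divisions_Suc[OF Suc.hyps, of 0] card_split_divisions_Suc[OF Suc.hyps, of 1]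
    by (simp_all add: numeral_2_eq_2 numeral_3_eq_3)
  have rec_T: "real (card (joined_divisions (Suc n) 2)) = ?D 1 + ?D 2 + ?S 2"
    "real (card (joined_divisions (Suc n) 3)) = ?D 2 + ?D 3 + ?S 3"
    using card_joined_divisions_Suc[OF Suc.hyps, of 1] card_joined_divisions_Suc[OF Suc.hyps, of 2]
    by (simp_all add: numeral_2_eq_2 numeral_3_eq_3)
  have rec_D: "real (card (divisions (Suc n) k)) =
      real (card (joined_divisions (Suc n) k)) + real (card (split_divisions (Suc n) k))" for k
    using card_divisions_joined_split by simp
  have ih: "?S 2 = 2 * real n - 1" "?D 2 = 2 * real n ^ 2 - real n"
    "?S 3 = 4/3 * real n ^ 3 - 3 * real n ^ 2 + 8/3 * real n - 1"
    "?D 3 = 2/3 * real n ^ 4 - 4/3 * real n ^ 3 + 11/6 * real n ^ 2 - 13/6 * real n + 1"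
    using Suc.IH by blast+
  show ?case
    unfolding rec_D rec_T rec_S small ih of_nat_Suc by (intro conjI; algebra)
qed

lemma d_eq_card_divisions: "d k n = card (divisions n k)"
  unfolding d_def divisions_def ..

lemma s_eq_card_split_divisions: "s k n = card (split_divisions n k)"
  unfolding s_def split_divisions_def divisions_def last_column_split_def by simp

theorem mainTheorem4:
  fixes n :: nat
  assumes "n \<ge> 1"
  shows "real (s 3 n) = 4/3 * real n ^ 3 - 3 * real n ^ 2 + 8/3 * real n - 1
       \<and> real (d 3 n) = 2/3 * real n ^ 4 - 4/3 * real n ^ 3 + 11/6 * real n ^ 2
           - 13/6 * real n + 1"
  using card_divisions_two_three[OF assms]
  unfolding s_eq_card_split_divisions d_eq_card_divisions by blast

end
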